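(* Let $n\ge 1$ and let $B^{[n]}$ be the $n$-th Kronecker power of $$B=\begin{bmatrix}1 & \sqrt{2}-1\\ 1 & -\sqrt{2}-1\end{bmatrix},$$ with its $2^n$ rows labeled by the vectors of $F^n$ ($F=\{0,1\}$ the binary field) in lexicographic order. Let $K^{[n]}$ be the $n$-th Kronecker power of $K=\frac{1}{\sqrt2}\begin{bmatrix}1&1\\1&-1\end{bmatrix}$. Then the rows of $B^{[n]}$ whose labels have even Hamming weight form a basis of the eigenspace of the eigenvalue $1$ of $K^{[n]}$, i.e. of $\{x\in\mathbb{R}^{2^n} : xK^{[n]}=x\}$ (row vectors).
   Context: For a matrix $M$, the Kronecker powers are $M^{[1]}=M$ and $M^{[m]}=M^{[m-1]}\otimes M$. Lexicographic labeling: the row with index $j$ ($0\le j<2^n$) is labeled by the binary expansion of $j$ written as a vector of length $n$ (most significant bit first). *)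

theory Defs
  imports Complex_Main
begin

text \<open>Matrices are functions nat => nat => real, used only on an explicit index range.
  Row vectors of length N are functions nat => real that vanish outside {..<N}.\<close>

text \<open>Row index i of A (x) M (M 2x2) corresponds to block row i div 2 and inner row i mod 2.\<close>
fun kron_pow :: "(nat \<Rightarrow> nat \<Rightarrow> real) \<Rightarrow> nat \<Rightarrow> nat \<Rightarrow> nat \<Rightarrow> real" where
  "kron_pow M 0 = (\<lambda>i j. 1)"
| "kron_pow M (Suc m) = (\<lambda>i j. kron_pow M m (i div 2) (j div 2) * M (i mod 2) (j mod 2))"

definition Bmat :: "nat \<Rightarrow> nat \<Rightarrow> real" where
  "Bmat i j = (if j = 0 then 1 else if i = 0 then sqrt 2 - 1 else - sqrt 2 - 1)"

definition Kmat :: "nat \<Rightarrow> nat \<Rightarrow> real" where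
  "Kmat i j = (1 / sqrt 2) * (if i = 1 \<and> j = 1 then -1 else 1)"

definition hamming_weight :: "nat \<Rightarrow> nat \<Rightarrow> nat" where
  "hamming_weight n i = (\<Sum>k<n. (i div 2 ^ k) mod 2)"

definition row_of :: "(nat \<Rightarrow> nat \<Rightarrow> real) \<Rightarrow> nat \<Rightarrow> nat \<Rightarrow> nat \<Rightarrow> real" where
  "row_of A N i = (\<lambda>k. if k < N then A i k else 0)"

definition eigenspace1 :: "(nat \<Rightarrow> nat \<Rightarrow> real) \<Rightarrow> nat \<Rightarrow> (nat \<Rightarrow> real) set" where
  "eigenspace1 A N = {x. (\<forall>k\<ge>N. x k = 0) \<and> (\<forall>j<N. (\<Sum>i<N. x i * A i j) = x j)}"

definition is_basis_of :: "nat \<Rightarrow> nat set \<Rightarrow> (nat \<Rightarrow> nat \<Rightarrow> real) \<Rightarrow> (nat \<Rightarrow> real) set \<Rightarrow> bool" where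
  "is_basis_of N I v S \<longleftrightarrow>
     (\<forall>i\<in>I. v i \<in> S) \<and>
     (\<forall>c. (\<forall>k<N. (\<Sum>i\<in>I. c i * v i k) = 0) \<longrightarrow> (\<forall>i\<in>I. c i = 0)) \<and>
     (\<forall>x\<in>S. \<exists>c. \<forall>k<N. x k = (\<Sum>i\<in>I. c i * v i k))"

end

theory Submission imports Defs begin

text \<open>The rows b_0, b_1 of B satisfy b_a K = (-1)^a b_a and are orthogonal, so by the
  mixed-product rule the rows of the Kronecker power satisfy b_i K^[n] = (-1)^wt(i) b_i and
  form an orthogonal basis of R^(2^n). Since K^[n] is symmetric, a fixed vector x of K^[n] is
  orthogonal to every row with eigenvalue -1, so its expansion in the orthogonal basis only
  involves the rows of even weight.\<close>

lemma sum_lessThan_double: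
  fixes f :: "nat \<Rightarrow> 'a::comm_monoid_add"
  shows "(\<Sum>k<2 * M. f k) = (\<Sum>q<M. f (2 * q) + f (2 * q + 1))"
  by (induction M) (simp_all add: algebra_simps)

lemma sum_lessThan_two_pow_Suc:
  fixes f :: "nat \<Rightarrow> 'a::comm_monoid_add"
  shows "(\<Sum>k<2 ^ Suc m. f k) = (\<Sum>q<2 ^ m. f (2 * q) + f (2 * q + 1))"
  using sum_lessThan_double[of f "2 ^ m"] by simp

lemma nat_eq_iff_div_mod_2: "(i::nat) = l \<longleftrightarrow> i div 2 = l div 2 \<and> i mod 2 = l mod 2"
  by (metis div_mult_mod_eq)

lemma Suc_mult_2_div_mod_2:
  "Suc (q * 2) div 2 = q" "Suc (q * 2) mod 2 = 1"
  by presburger+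

lemma kron_pow_mult:
  "(\<Sum>k<2 ^ m. kron_pow M m i k * kron_pow M' m k j)
     = kron_pow (\<lambda>a b. M a 0 * M' 0 b + M a 1 * M' 1 b) m i j"
proof (induction m arbitrary: i j)
  case 0
  then show ?case by simp
next
  case (Suc m)
  have "(\<Sum>k<2 ^ Suc m. kron_pow M (Suc m) i k * kron_pow M' (Suc m) k j)
     = (\<Sum>q<2 ^ m. kron_pow M m (i div 2) q * kron_pow M' m q (j div 2)) *
         (M (i mod 2) 0 * M' 0 (j mod 2) + M (i mod 2) 1 * M' 1 (j mod 2))"
    unfolding sum_lessThan_two_pow_Suc sum_distrib_right
    by (simp add: Suc_mult_2_div_mod_2 algebra_simps)
  then show ?case by (simp add: Suc.IH)
qed

lemma kron_pow_cong:
  "(\<And>a b. a < 2 \<Longrightarrow> b < 2 \<Longrightarrow> M a b = M' a b) \<Longrightarrow> kron_pow M m i j = kron_pow M' m i j"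
  by (induction m arbitrary: i j) auto

lemma kron_pow_transpose: "kron_pow (\<lambda>a b. M b a) m i j = kron_pow M m j i"
  by (induction m arbitrary: i j) auto

lemma kron_pow_identity:
  "i < 2 ^ m \<Longrightarrow> j < 2 ^ m \<Longrightarrow> kron_pow (\<lambda>a b. of_bool (a = b)) m i j = of_bool (i = j)"
proof (induction m arbitrary: i j)
  case (Suc m)
  then have "i div 2 < 2 ^ m" "j div 2 < 2 ^ m" by auto
  with Suc.IH show ?case by (auto simp: nat_eq_iff_div_mod_2[of i j])
qed simp

fun kron_weight :: "(nat \<Rightarrow> real) \<Rightarrow> nat \<Rightarrow> nat \<Rightarrow> real" where
  "kron_weight f 0 i = 1"
| "kron_weight f (Suc m) i = kron_weight f m (i div 2) * f (i mod 2)"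

lemma kron_pow_scale_rows:
  "kron_pow (\<lambda>a b. f a * M a b) m i j = kron_weight f m i * kron_pow M m i j"
  by (induction m arbitrary: i j) auto

lemma kron_weight_inverse: "kron_weight (\<lambda>a. inverse (f a)) m i = inverse (kron_weight f m i)"
  by (induction m arbitrary: i) (simp_all add: inverse_mult_distrib)

lemma kron_weight_pos: "(\<And>a. f a > 0) \<Longrightarrow> kron_weight f m i > 0"
  by (induction m arbitrary: i) simp_all

lemma hamming_weight_Suc: "hamming_weight (Suc m) i = i mod 2 + hamming_weight m (i div 2)"
  unfolding hamming_weight_def sum.lessThan_Suc_shift by (simp add: div_mult2_eq)

lemma kron_weight_sign: "kron_weight (\<lambda>a. (-1) ^ a) m i = (-1) ^ hamming_weight m i"
proof (induction m arbitrary: i)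
  case 0
  then show ?case by (simp add: hamming_weight_def)
next
  case (Suc m)
  then show ?case by (simp add: hamming_weight_Suc power_add mult.commute)
qed

context
  fixes N :: nat and B K :: "nat \<Rightarrow> nat \<Rightarrow> real" and lam d :: "nat \<Rightarrow> real"
  assumes rows_eigen: "\<And>i j. i < N \<Longrightarrow> j < N \<Longrightarrow> (\<Sum>k<N. B i k * K k j) = lam i * B i j"
    and rows_orthogonal: "\<And>i l. i < N \<Longrightarrow> l < N \<Longrightarrow>
          (\<Sum>k<N. B i k * B l k) = (if i = l then d i else 0)"
    and columns_complete: "\<And>k l. k < N \<Longrightarrow> l < N \<Longrightarrow>
          (\<Sum>i<N. B i k * B i l / d i) = of_bool (k = l)"
    and weight_nonzero: "\<And>i. i < N \<Longrightarrow> d i \<noteq> 0"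
    and symmetric: "\<And>i j. i < N \<Longrightarrow> j < N \<Longrightarrow> K i j = K j i"
begin

lemma row_of_in_eigenspace1:
  assumes "i < N" "lam i = 1"
  shows "row_of B N i \<in> eigenspace1 K N"
proof -
  have "(\<Sum>k<N. row_of B N i k * K k j) = row_of B N i j" if "j < N" for j
    using rows_eigen[OF \<open>i < N\<close> that] \<open>lam i = 1\<close> that by (simp add: row_of_def)
  then show ?thesis unfolding eigenspace1_def by (simp add: row_of_def)
qed

lemma rows_linearly_independent:
  assumes I: "I \<subseteq> {..<N}" and zero: "\<forall>k<N. (\<Sum>i\<in>I. c i * row_of B N i k) = 0" and "j \<in> I"
  shows "c j = 0"
proof -
  have j: "j < N" using I \<open>j \<in> I\<close> by auto
  have "0 = (\<Sum>k<N. (\<Sum>i\<in>I. c i * B i k) * B j k)"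
    using zero by (simp add: row_of_def)
  also have "\<dots> = (\<Sum>k<N. \<Sum>i\<in>I. c i * (B i k * B j k))"
    by (simp add: sum_distrib_right mult.assoc)
  also have "\<dots> = (\<Sum>i\<in>I. c i * (\<Sum>k<N. B i k * B j k))"
    by (subst sum.swap) (simp add: sum_distrib_left)
  also have "\<dots> = (\<Sum>i\<in>I. c i * (if i = j then d i else 0))"
    using I j by (intro sum.cong) (auto simp: rows_orthogonal)
  also have "\<dots> = c j * d j"
    using \<open>j \<in> I\<close> I finite_subset[OF I] by (simp add: if_distrib sum.delta cong: if_cong)
  finally show ?thesis using weight_nonzero[OF j] by simp
qed

text \<open>Since K is symmetric, pairing x = x K with a row of eigenvalue lam i gives
  <x, B i> = lam i <x, B i>.\<close>
lemma eigenspace1_orthogonal_row: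
  assumes x: "x \<in> eigenspace1 K N" and "i < N" "lam i \<noteq> 1"
  shows "(\<Sum>l<N. x l * B i l) = 0"
proof -
  have xK: "(\<Sum>j<N. x j * K j l) = x l" if "l < N" for l
    using x that unfolding eigenspace1_def by auto
  have "(\<Sum>l<N. x l * B i l) = (\<Sum>l<N. (\<Sum>j<N. x j * K l j) * B i l)"
    using xK symmetric by (intro sum.cong) auto
  also have "\<dots> = (\<Sum>l<N. \<Sum>j<N. x j * (B i l * K l j))"
    by (simp add: sum_distrib_left sum_distrib_right mult_ac)
  also have "\<dots> = (\<Sum>j<N. x j * (\<Sum>l<N. B i l * K l j))"
    by (subst sum.swap) (simp add: sum_distrib_left)
  also have "\<dots> = lam i * (\<Sum>l<N. x l * B i l)"
    using \<open>i < N\<close> by (simp add: rows_eigen sum_distrib_left algebra_simps)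
  finally show ?thesis using \<open>lam i \<noteq> 1\<close> by simp
qed

lemma eigenspace1_in_span_rows:
  assumes x: "x \<in> eigenspace1 K N" and k: "k < N"
  shows "x k = (\<Sum>i\<in>{i. i < N \<and> lam i = 1}. (\<Sum>l<N. x l * B i l) / d i * row_of B N i k)"
proof -
  have "(\<Sum>i\<in>{i. i < N \<and> lam i = 1}. (\<Sum>l<N. x l * B i l) / d i * row_of B N i k)
      = (\<Sum>i\<in>{i. i < N \<and> lam i = 1}. (\<Sum>l<N. x l * B i l) / d i * B i k)"
    using k by (simp add: row_of_def)
  also have "\<dots> = (\<Sum>i<N. (\<Sum>l<N. x l * B i l) / d i * B i k)"
    using eigenspace1_orthogonal_row[OF x] by (intro sum.mono_neutral_left) auto
  also have "\<dots> = (\<Sum>i<N. \<Sum>l<N. x l * (B i l * B i k / d i))"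
    by (simp add: sum_distrib_left sum_distrib_right sum_divide_distrib mult_ac)
  also have "\<dots> = (\<Sum>l<N. x l * (\<Sum>i<N. B i l * B i k / d i))"
    by (subst sum.swap) (simp add: sum_distrib_left)
  also have "\<dots> = x k"
    using k by (simp add: columns_complete if_distrib sum.delta cong: if_cong)
  finally show ?thesis by simp
qed

lemma rows_basis_of_eigenspace1:
  "is_basis_of N {i. i < N \<and> lam i = 1} (row_of B N) (eigenspace1 K N)"
  unfolding is_basis_of_def
proof (intro conjI ballI allI impI)
  show "row_of B N i \<in> eigenspace1 K N" if "i \<in> {i. i < N \<and> lam i = 1}" for i
    using that row_of_in_eigenspace1 by simp
  show "c i = 0" if "\<forall>k<N. (\<Sum>i\<in>{i. i < N \<and> lam i = 1}. c i * row_of B N i k) = 0"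
    and "i \<in> {i. i < N \<and> lam i = 1}" for c i
    using that by (intro rows_linearly_independent[of "{i. i < N \<and> lam i = 1}" c]) auto
  show "\<exists>c. \<forall>k<N. x k = (\<Sum>i\<in>{i. i < N \<and> lam i = 1}. c i * row_of B N i k)"
    if "x \<in> eigenspace1 K N" for x
    using eigenspace1_in_span_rows[OF that]
    by (intro exI[of _ "\<lambda>i. (\<Sum>l<N. x l * B i l) / d i"]) simp
qed

end

definition Bmat_norm2 :: "nat \<Rightarrow> real" where
  "Bmat_norm2 a = (if a = 0 then 4 - 2 * sqrt 2 else 4 + 2 * sqrt 2)"

lemma Bmat_norm2_pos: "Bmat_norm2 a > 0"
proof -
  have "sqrt 2 < 2" by (rule real_less_lsqrt) auto
  then have "4 - 2 * sqrt 2 > 0" "4 + 2 * sqrt 2 > (0::real)"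
    using real_sqrt_ge_zero[of 2] by linarith+
  then show ?thesis unfolding Bmat_norm2_def by simp
qed

lemma Bmat_mult_Kmat:
  "a < 2 \<Longrightarrow> b < 2 \<Longrightarrow> Bmat a 0 * Kmat 0 b + Bmat a 1 * Kmat 1 b = (-1) ^ a * Bmat a b"
  by (auto dest!: less_2_cases simp: Bmat_def Kmat_def field_simps)

lemma Bmat_mult_transpose:
  "a < 2 \<Longrightarrow> b < 2 \<Longrightarrow> Bmat a 0 * Bmat b 0 + Bmat a 1 * Bmat b 1
     = Bmat_norm2 a * of_bool (a = b)"
  by (auto dest!: less_2_cases simp: Bmat_def Bmat_norm2_def algebra_simps)

lemma Bmat_transpose_mult:
  "a < 2 \<Longrightarrow> b < 2 \<Longrightarrow> Bmat 0 a * (inverse (Bmat_norm2 0) * Bmat 0 b)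
     + Bmat 1 a * (inverse (Bmat_norm2 1) * Bmat 1 b) = of_bool (a = b)"
  using Bmat_norm2_pos[of 0] Bmat_norm2_pos[of 1]
  by (auto dest!: less_2_cases simp: Bmat_def Bmat_norm2_def field_simps)

text \<open>The three identities B K = diag((-1)^a) B, B B^T = diag(norm2) and
  B^T diag(norm2)^-1 B = 1 pass to Kronecker powers by the mixed-product rule.\<close>

lemma kron_pow_Bmat_Kmat:
  "(\<Sum>k<2 ^ m. kron_pow Bmat m i k * kron_pow Kmat m k j)
     = (-1) ^ hamming_weight m i * kron_pow Bmat m i j"
proof -
  have "kron_pow (\<lambda>a b. Bmat a 0 * Kmat 0 b + Bmat a 1 * Kmat 1 b) m i j
      = kron_pow (\<lambda>a b. (-1) ^ a * Bmat a b) m i j"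
    by (rule kron_pow_cong) (rule Bmat_mult_Kmat)
  then show ?thesis by (simp add: kron_pow_mult kron_pow_scale_rows kron_weight_sign)
qed

lemma kron_pow_Bmat_orthogonal:
  assumes "i < 2 ^ m" "l < 2 ^ m"
  shows "(\<Sum>k<2 ^ m. kron_pow Bmat m i k * kron_pow Bmat m l k)
     = (if i = l then kron_weight Bmat_norm2 m i else 0)"
proof -
  have "(\<Sum>k<2 ^ m. kron_pow Bmat m i k * kron_pow Bmat m l k)
      = (\<Sum>k<2 ^ m. kron_pow Bmat m i k * kron_pow (\<lambda>a b. Bmat b a) m k l)"
    by (simp add: kron_pow_transpose[of Bmat])
  also have "\<dots> = kron_pow (\<lambda>a b. Bmat_norm2 a * of_bool (a = b)) m i l"
    unfolding kron_pow_mult by (rule kron_pow_cong) (rule Bmat_mult_transpose)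
  also have "\<dots> = (if i = l then kron_weight Bmat_norm2 m i else 0)"
    using assms by (simp add: kron_pow_scale_rows kron_pow_identity)
  finally show ?thesis .
qed

lemma kron_pow_Bmat_complete:
  assumes "k < 2 ^ m" "l < 2 ^ m"
  shows "(\<Sum>i<2 ^ m. kron_pow Bmat m i k * kron_pow Bmat m i l / kron_weight Bmat_norm2 m i)
     = of_bool (k = l)"
proof -
  have "(\<Sum>i<2 ^ m. kron_pow Bmat m i k * kron_pow Bmat m i l / kron_weight Bmat_norm2 m i)
      = (\<Sum>i<2 ^ m. kron_pow (\<lambda>a b. Bmat b a) m k i *
          kron_pow (\<lambda>a b. inverse (Bmat_norm2 a) * Bmat a b) m i l)"
    by (simp only: kron_pow_transpose[of Bmat] kron_pow_scale_rows kron_weight_inverse)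
      (simp add: divide_inverse mult_ac)
  also have "\<dots> = kron_pow (\<lambda>a b. of_bool (a = b)) m k l"
    unfolding kron_pow_mult by (rule kron_pow_cong) (rule Bmat_transpose_mult)
  also have "\<dots> = of_bool (k = l)"
    using assms by (rule kron_pow_identity)
  finally show ?thesis .
qed

lemma kron_pow_Kmat_symmetric: "kron_pow Kmat m i j = kron_pow Kmat m j i"
proof -
  have "(\<lambda>a b. Kmat b a) = Kmat" by (auto simp: Kmat_def fun_eq_iff)
  then show ?thesis using kron_pow_transpose[of Kmat m j i] by simp
qed

theorem lemma1:
  fixes n :: nat
  assumes "n \<ge> 1"
  shows "is_basis_of (2 ^ n) {i. i < 2 ^ n \<and> even (hamming_weight n i)}
           (row_of (kron_pow Bmat n) (2 ^ n)) (eigenspace1 (kron_pow Kmat n) (2 ^ n))"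
proof -
  have "{i. i < 2 ^ n \<and> even (hamming_weight n i)}
      = {i. i < 2 ^ n \<and> (-1) ^ hamming_weight n i = (1::real)}"
    by (auto simp: minus_one_power_iff)
  moreover have "is_basis_of (2 ^ n) {i. i < 2 ^ n \<and> (-1) ^ hamming_weight n i = (1::real)}
      (row_of (kron_pow Bmat n) (2 ^ n)) (eigenspace1 (kron_pow Kmat n) (2 ^ n))"
    by (rule rows_basis_of_eigenspace1[where d = "kron_weight Bmat_norm2 n"])
      (simp add: kron_pow_Bmat_Kmat, simp add: kron_pow_Bmat_orthogonal,
        simp add: kron_pow_Bmat_complete, simp add: kron_weight_pos Bmat_norm2_pos less_imp_neq[symmetric],
        rule kron_pow_Kmat_symmetric)
  ultimately show ?thesis by simp
qed

end
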